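(* Let $\Gamma$ be a connected $\mathbb Z$-leg-weighted graph, $w\in W(\Gamma)$ a weighting, and $\gamma$ a positive cycle for $w$. Let $\Gamma/\gamma$ be the graph obtained from $\Gamma$ by contracting every edge of $\gamma$, and $w|_{\Gamma/\gamma}$ the restricted weighting. Then $$c_w = c_{w|_{\Gamma/\gamma}}\times\{\mathbf 0\},$$ where $c_{w|_{\Gamma/\gamma}}\subseteq\mathbb Q_{\ge0}^{E(\Gamma/\gamma)}$ is the cone of the restricted weighting and $\mathbf 0$ is the zero vector of $\mathbb Q_{\ge0}^{E(\gamma)}$ (using $\mathbb Q_{\ge 0}^{E(\Gamma)}=\mathbb Q_{\ge0}^{E(\Gamma/\gamma)}\times\mathbb Q_{\ge0}^{E(\gamma)}$).
   Context: A graph consists of finite sets $V$ (vertices) and $H$ (half-edges), a map $\mathrm{end}\colon H\to V$, an involution $i$ of $H$, a genus $g\colon V\to\mathbb Z_{\ge0}$ and an integer twist $k$. Legs are fixed points of $i$; edges are pairs $\{h,i(h)\}$ with $h\neq i(h)$; a directed edge is a non-leg half-edge $h$ from $\mathrm{end}(h)$ to $\mathrm{end}(i(h))$. $\mathrm{val}(v)$ counts non-leg half-edges at $v$, $\kappa(v)=2g(v)-2+\mathrm{val}(v)$, $g(\Gamma)=b_1(\Gamma)+\sum g(v)$. A cycle is a closed walk of directed edges repeating no vertex or undirected edge. A weighting is $w\colon H\to\mathbb Z$ with $w(h)+w(i(h))=0$ for $h\ne i(h)$ and $\sum_{\mathrm{end}(h)=v}w(h)+k\kappa(v)=0$ for all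 $v$; $W(\Gamma)$ is the set of weightings with prescribed leg values (summing to $-k(2g(\Gamma)-2)$). Contracting edges (merging their endpoints, with genera of merged vertices adding up together with the first Betti number of the contracted subgraph) sends a weighting to a weighting on the contracted graph by restriction to the remaining half-edges. For a directed edge $e$ of a cycle $\gamma$, $w_\gamma(e)$ is the value of $w$ on the half-edge of $e$ at its source. $c_w\subseteq\mathbb Q_{\ge0}^{E}$ is the cone of $t$ with $\sum_{e\in\gamma}w_\gamma(e)t(e)=0$ for all cycles $\gamma$. A positive cycle for $w$ is a cycle $\gamma$ with $w_\gamma(e)>0$ for all $e\in\gamma$. *)

theory Defs
  imports Complex_Main
begin

record ('v, 'h) lgraph =
  verts  :: "'v set"
  hedges :: "'h set"
  endp   :: "'h \<Rightarrow> 'v"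
  invol  :: "'h \<Rightarrow> 'h"
  genus  :: "'v \<Rightarrow> nat"
  twist  :: int

definition wf_graph :: "('v, 'h) lgraph \<Rightarrow> bool" where
  "wf_graph G \<longleftrightarrow> finite (verts G) \<and> finite (hedges G)
     \<and> (\<forall>h\<in>hedges G. endp G h \<in> verts G)
     \<and> (\<forall>h\<in>hedges G. invol G h \<in> hedges G \<and> invol G (invol G h) = h)"

definition is_leg :: "('v, 'h) lgraph \<Rightarrow> 'h \<Rightarrow> bool" where
  "is_leg G h \<longleftrightarrow> invol G h = h"

definition edges :: "('v, 'h) lgraph \<Rightarrow> 'h set set" where
  "edges G = {{h, invol G h} | h. h \<in> hedges G \<and> invol G h \<noteq> h}"

definition val :: "('v, 'h) lgraph \<Rightarrow> 'v \<Rightarrow> nat" where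
  "val G v = card {h \<in> hedges G. endp G h = v \<and> invol G h \<noteq> h}"

definition kappa :: "('v, 'h) lgraph \<Rightarrow> 'v \<Rightarrow> int" where
  "kappa G v = 2 * int (genus G v) - 2 + int (val G v)"

definition adj :: "('v, 'h) lgraph \<Rightarrow> ('v \<times> 'v) set" where
  "adj G = {(endp G h, endp G (invol G h)) | h. h \<in> hedges G \<and> invol G h \<noteq> h}"

definition connected_graph :: "('v, 'h) lgraph \<Rightarrow> bool" where
  "connected_graph G \<longleftrightarrow> verts G \<noteq> {} \<and>
     (\<forall>u\<in>verts G. \<forall>v\<in>verts G. (u, v) \<in> (adj G)\<^sup>*)"

text \<open>Weightings (the leg values are whatever w assigns to legs; W(Gamma) fixes them).\<close>
definition is_weighting :: "('v, 'h) lgraph \<Rightarrow> ('h \<Rightarrow> int) \<Rightarrow> bool" where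
  "is_weighting G w \<longleftrightarrow>
     (\<forall>h\<in>hedges G. invol G h \<noteq> h \<longrightarrow> w h + w (invol G h) = 0) \<and>
     (\<forall>v\<in>verts G. (\<Sum>h\<in>{h\<in>hedges G. endp G h = v}. w h) + twist G * kappa G v = 0)"

definition is_cycle :: "('v, 'h) lgraph \<Rightarrow> 'h list \<Rightarrow> bool" where
  "is_cycle G c \<longleftrightarrow> c \<noteq> [] \<and>
     (\<forall>h\<in>set c. h \<in> hedges G \<and> invol G h \<noteq> h) \<and>
     (\<forall>j<length c. endp G (invol G (c ! j)) = endp G (c ! ((j + 1) mod length c))) \<and>
     distinct (map (endp G) c) \<and>
     distinct (map (\<lambda>h. {h, invol G h}) c)"

definition cycle_edges :: "('v, 'h) lgraph \<Rightarrow> 'h list \<Rightarrow> 'h set set" where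
  "cycle_edges G c = (\<lambda>h. {h, invol G h}) ` set c"

definition positive_cycle :: "('v, 'h) lgraph \<Rightarrow> ('h \<Rightarrow> int) \<Rightarrow> 'h list \<Rightarrow> bool" where
  "positive_cycle G w c \<longleftrightarrow> is_cycle G c \<and> (\<forall>h\<in>set c. w h > 0)"

text \<open>The cone c_w in Q_{>=0}^E, elements represented as functions on 'h set that vanish
  outside E. For a directed edge h of a cycle, w_gamma is the value of w at h (its source
  half-edge).\<close>
definition cone :: "('v, 'h) lgraph \<Rightarrow> ('h \<Rightarrow> int) \<Rightarrow> ('h set \<Rightarrow> rat) set" where
  "cone G w = {t. (\<forall>e\<in>edges G. t e \<ge> 0) \<and> (\<forall>e. e \<notin> edges G \<longrightarrow> t e = 0) \<and>
     (\<forall>c. is_cycle G c \<longrightarrow> (\<Sum>h\<leftarrow>c. of_int (w h) * t {h, invol G h}) = 0)}"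

text \<open>Contraction of a set S of edges: vertices are the classes of V under the equivalence
  generated by S; half-edges of S are removed; the genus of a merged vertex is the sum of the
  genera plus the first Betti number of the contracted subgraph on that class.\<close>
definition sadj :: "('v, 'h) lgraph \<Rightarrow> 'h set set \<Rightarrow> ('v \<times> 'v) set" where
  "sadj G S = {(endp G h, endp G (invol G h)) | h. h \<in> hedges G \<and> {h, invol G h} \<in> S}"

definition vclass :: "('v, 'h) lgraph \<Rightarrow> 'h set set \<Rightarrow> 'v \<Rightarrow> 'v set" where
  "vclass G S v = {u \<in> verts G. (v, u) \<in> ((sadj G S) \<union> (sadj G S)\<inverse>)\<^sup>*}"

definition contract :: "('v, 'h) lgraph \<Rightarrow> 'h set set \<Rightarrow> ('v set, 'h) lgraph" where
  "contract G S = \<lparr> verts = vclass G S ` verts G,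
     hedges = hedges G - \<Union>S,
     endp = (\<lambda>h. vclass G S (endp G h)),
     invol = invol G,
     genus = (\<lambda>C. (\<Sum>v\<in>C. genus G v) +
        nat (int (card {e\<in>S. \<exists>h\<in>e. h \<in> hedges G \<and> endp G h \<in> C}) - int (card C) + 1)),
     twist = twist G \<rparr>"

end

theory Submission
  imports Defs
begin

(* Since w is positive along the cycle c, the cycle relation of c is a sum of nonnegative terms
   w(h) t(e), so every t in the cone of G vanishes on the edges of c; the same holds trivially
   for the cone of the contraction, whose edges exclude them. A cycle of the contraction through the contracted vertex is closed up
   to a cycle of G by an arc of c, on which t vanishes. Conversely, a cycle of G becomes a closed
   walk of the contraction that may pass through the contracted vertex several times; cutting it
   at these passages and discarding edges of c splits it into cycles of the contraction. *)

lemma distinct_append_swap: "distinct (xs @ ys) \<Longrightarrow> distinct (ys @ xs)"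
  by auto

lemma distinct_length_le_1: "length xs \<le> 1 \<Longrightarrow> distinct xs"
  by (cases xs) auto

lemma distinct_map_by_filter:
  assumes "distinct (map f (filter P xs))" "distinct (map f (filter (\<lambda>x. \<not> P x) xs))"
    "\<forall>x\<in>set xs. \<forall>y\<in>set xs. P x \<longrightarrow> \<not> P y \<longrightarrow> f x \<noteq> f y"
  shows "distinct (map f xs)"
  using assms by (induction xs) (auto split: if_splits)

fun walk :: "('v, 'h) lgraph \<Rightarrow> 'v \<Rightarrow> 'h list \<Rightarrow> 'v \<Rightarrow> bool" where
  "walk G a [] b \<longleftrightarrow> a = b"
| "walk G a (h # p) b \<longleftrightarrow> endp G h = a \<and> walk G (endp G (invol G h)) p b"

definition closed_walk :: "('v, 'h) lgraph \<Rightarrow> 'h list \<Rightarrow> bool" where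
  "closed_walk G d \<longleftrightarrow> d \<noteq> [] \<and> (\<exists>a. walk G a d a)"

lemma walk_append: "walk G a (p @ q) b \<longleftrightarrow> (\<exists>m. walk G a p m \<and> walk G m q b)"
  by (induction p arbitrary: a) auto

lemma walk_iff_map:
  "walk G a p b \<longleftrightarrow> a # map (\<lambda>h. endp G (invol G h)) p = map (endp G) p @ [b]"
  by (induction p arbitrary: a) auto

lemma closed_walk_Cons [simp]:
  "closed_walk G (h # p) \<longleftrightarrow> walk G (endp G h) (h # p) (endp G h)"
  by (auto simp: closed_walk_def)

lemma closed_walk_rotate: "closed_walk G (u @ v) \<Longrightarrow> closed_walk G (v @ u)"
  by (auto simp: closed_walk_def walk_append)

lemma closed_walk_iff_rotate1:
  "closed_walk G d \<longleftrightarrow> d \<noteq> [] \<and> map (\<lambda>h. endp G (invol G h)) d = rotate1 (map (endp G) d)"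
proof (cases d)
  case Nil
  then show ?thesis by (simp add: closed_walk_def)
next
  case (Cons h p)
  then show ?thesis by (simp add: walk_iff_map)
qed

lemma is_cycle_iff:
  "is_cycle G d \<longleftrightarrow> closed_walk G d \<and> (\<forall>h\<in>set d. h \<in> hedges G \<and> invol G h \<noteq> h) \<and>
     distinct (map (endp G) d) \<and> distinct (map (\<lambda>h. {h, invol G h}) d)"
proof -
  have "rotate1 (map (endp G) d) ! j = endp G (d ! ((j + 1) mod length d))" if "j < length d" for j
  proof -
    have "0 < length d" using that by linarith
    then have "(j + 1) mod length d < length d" by simp
    then show ?thesis using that by (simp add: nth_rotate1)
  qed
  then have "(\<forall>j<length d. endp G (invol G (d ! j)) = endp G (d ! ((j + 1) mod length d))) \<longleftrightarrow>
      map (\<lambda>h. endp G (invol G h)) d = rotate1 (map (endp G) d)"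
    by (auto simp: list_eq_iff_nth_eq)
  then show ?thesis
    unfolding is_cycle_def closed_walk_iff_rotate1 by auto
qed

lemma is_cycle_rotate:
  assumes "is_cycle G (u @ v)"
  shows "is_cycle G (v @ u)"
  using assms distinct_append_swap[of "map (endp G) u" "map (endp G) v"]
    distinct_append_swap[of "map (\<lambda>h. {h, invol G h}) u" "map (\<lambda>h. {h, invol G h}) v"]
  unfolding is_cycle_iff by (auto simp del: distinct_append simp: closed_walk_rotate)

lemma cycle_edges_subset_edges: "is_cycle G c \<Longrightarrow> cycle_edges G c \<subseteq> edges G"
  unfolding is_cycle_def cycle_edges_def edges_def by blast

lemma cycle_arc:
  assumes c: "is_cycle G c" and a: "a \<in> endp G ` set c" and b: "b \<in> endp G ` set c"
  obtains p where "set p \<subseteq> set c" "walk G a p b" "b \<notin> endp G ` set p"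
    "distinct (map (endp G) p)" "distinct (map (\<lambda>h. {h, invol G h}) p)"
proof -
  obtain h where h: "h \<in> set c" "a = endp G h" using a by blast
  obtain u r where "c = u @ h # r" using split_list[OF h(1)] by blast
  then have c': "is_cycle G ((h # r) @ u)" using c is_cycle_rotate by fastforce
  then have set_c': "set ((h # r) @ u) = set c" using \<open>c = u @ h # r\<close> by auto
  obtain g where g: "g \<in> set ((h # r) @ u)" "b = endp G g" using b set_c' by auto
  obtain p x where px: "(h # r) @ u = p @ g # x" using split_list[OF g(1)] by blast
  have "walk G a ((h # r) @ u) a" using c' h(2) unfolding is_cycle_iff by simp
  then have "walk G a (p @ g # x) a" by (simp only: px)
  then have "walk G a p b" using g(2) by (auto simp: walk_append)
  moreover have "set p \<subseteq> set c" using px set_c' by auto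
  moreover have "b \<notin> endp G ` set p" "distinct (map (endp G) p)"
    "distinct (map (\<lambda>h. {h, invol G h}) p)"
    using c' g(2) unfolding px is_cycle_iff by auto
  ultimately show ?thesis using that by blast
qed

definition walk_sum ::
  "('v, 'h) lgraph \<Rightarrow> ('h \<Rightarrow> int) \<Rightarrow> ('h set \<Rightarrow> rat) \<Rightarrow> 'h list \<Rightarrow> rat" where
  "walk_sum G w t q = (\<Sum>h\<leftarrow>q. of_int (w h) * t {h, invol G h})"

definition cycle_balanced :: "('v, 'h) lgraph \<Rightarrow> ('h \<Rightarrow> int) \<Rightarrow> ('h set \<Rightarrow> rat) \<Rightarrow> bool" where
  "cycle_balanced G w t \<longleftrightarrow> (\<forall>d. is_cycle G d \<longrightarrow> walk_sum G w t d = 0)"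

lemma walk_sum_simps [simp]:
  "walk_sum G w t [] = 0"
  "walk_sum G w t (h # q) = of_int (w h) * t {h, invol G h} + walk_sum G w t q"
  "walk_sum G w t (p @ q) = walk_sum G w t p + walk_sum G w t q"
  by (simp_all add: walk_sum_def)

lemma walk_sum_rotate: "walk_sum G w t (u @ v) = walk_sum G w t (v @ u)"
  by (simp add: add.commute)

lemma walk_sum_eq_0: "\<forall>h\<in>set q. t {h, invol G h} = 0 \<Longrightarrow> walk_sum G w t q = 0"
  by (induction q) auto

lemma cone_iff:
  "t \<in> cone G w \<longleftrightarrow> (\<forall>e\<in>edges G. 0 \<le> t e) \<and> (\<forall>e. e \<notin> edges G \<longrightarrow> t e = 0) \<and>
     cycle_balanced G w t"
  by (simp add: cone_def cycle_balanced_def walk_sum_def)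

lemma positive_cycle_cone_vanishes:
  assumes "positive_cycle G w c" "t \<in> cone G w" "e \<in> cycle_edges G c"
  shows "t e = 0"
proof -
  have pos: "\<forall>h\<in>set c. 0 < w h" and cyc: "is_cycle G c"
    using assms(1) unfolding positive_cycle_def by auto
  have nonneg: "\<forall>h\<in>set c. 0 \<le> t {h, invol G h}"
    using assms(2) cycle_edges_subset_edges[OF cyc] by (auto simp: cone_def cycle_edges_def)
  then have "\<forall>h\<in>set c. 0 \<le> of_int (w h) * t {h, invol G h}"
    using pos by (simp add: less_imp_le)
  moreover have "walk_sum G w t c = 0"
    using assms(2) cyc by (simp add: cone_iff cycle_balanced_def)
  ultimately have "\<forall>h\<in>set c. of_int (w h) * t {h, invol G h} = 0"
    using sum_list_nonneg_eq_0_iff[of "map (\<lambda>h. of_int (w h) * t {h, invol G h}) c"]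
    by (auto simp: walk_sum_def)
  then show ?thesis using assms(3) pos by (force simp: cycle_edges_def)
qed

lemma hedges_contract [simp]: "hedges (contract G S) = hedges G - \<Union>S"
  and endp_contract [simp]: "endp (contract G S) = (\<lambda>h. vclass G S (endp G h))"
  and invol_contract [simp]: "invol (contract G S) = invol G"
  by (simp_all add: contract_def)

lemma walk_sum_contract [simp]: "walk_sum (contract G S) = walk_sum G"
  by (simp add: walk_sum_def fun_eq_iff)

locale cycle_contraction =
  fixes G :: "('v, 'h) lgraph" and c :: "'h list"
  assumes wf: "wf_graph G" and cycle: "is_cycle G c"
begin

abbreviation "S \<equiv> cycle_edges G c"
abbreviation "C \<equiv> endp G ` set c"
abbreviation "Gc \<equiv> contract G S"
abbreviation "cl \<equiv> vclass G S"

lemma endp_in_verts: "h \<in> hedges G \<Longrightarrow> endp G h \<in> verts G"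
  and invol_in_hedges: "h \<in> hedges G \<Longrightarrow> invol G h \<in> hedges G"
  and invol_invol: "h \<in> hedges G \<Longrightarrow> invol G (invol G h) = h"
  using wf unfolding wf_graph_def by auto

lemma cycle_hedge: "h \<in> set c \<Longrightarrow> h \<in> hedges G \<and> invol G h \<noteq> h"
  using cycle unfolding is_cycle_def by blast

lemma endp_invol_cycle: "h \<in> set c \<Longrightarrow> endp G (invol G h) \<in> C"
proof -
  assume "h \<in> set c"
  then have "endp G (invol G h) \<in> set (map (\<lambda>h. endp G (invol G h)) c)" by simp
  also have "\<dots> = set (rotate1 (map (endp G) c))"
    using cycle by (simp only: is_cycle_iff closed_walk_iff_rotate1)
  finally show ?thesis by simp
qed

lemma Union_cycle_edges_iff: "h \<in> hedges G \<Longrightarrow> h \<in> \<Union>S \<longleftrightarrow> {h, invol G h} \<in> S"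
  using cycle_hedge invol_invol unfolding cycle_edges_def by fastforce

lemma Union_cycle_edges_endp: "h \<in> \<Union>S \<Longrightarrow> endp G h \<in> C \<and> endp G (invol G h) \<in> C"
  using cycle_hedge invol_invol endp_invol_cycle unfolding cycle_edges_def by fastforce

lemma rtrancl_sadj_cycle:
  "(v, u) \<in> (sadj G S \<union> (sadj G S)\<inverse>)\<^sup>* \<Longrightarrow> u = v \<or> (v \<in> C \<and> u \<in> C)"
proof (induction rule: rtrancl_induct)
  case (step u u')
  have "u \<in> C \<and> u' \<in> C"
    using step.hyps(2) Union_cycle_edges_endp unfolding sadj_def by blast
  then show ?case using step.IH by auto
qed simp

lemma walk_cycle_sadj: "walk G a p b \<Longrightarrow> set p \<subseteq> set c \<Longrightarrow> (a, b) \<in> (sadj G S)\<^sup>*"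
proof (induction p arbitrary: a)
  case (Cons h p)
  then have "(a, endp G (invol G h)) \<in> sadj G S"
    using cycle_hedge unfolding sadj_def cycle_edges_def by fastforce
  then show ?case using Cons by (simp add: converse_rtrancl_into_rtrancl)
qed simp

lemma vclass_cycle: "v \<in> C \<Longrightarrow> cl v = C"
proof
  assume v: "v \<in> C"
  show "cl v \<subseteq> C" using v rtrancl_sadj_cycle unfolding vclass_def by blast
  show "C \<subseteq> cl v"
  proof
    fix u assume u: "u \<in> C"
    then obtain p where "walk G v p u" "set p \<subseteq> set c" using cycle_arc[OF cycle v] by metis
    then have "(v, u) \<in> (sadj G S \<union> (sadj G S)\<inverse>)\<^sup>*"
      using walk_cycle_sadj rtrancl_mono[of "sadj G S"] by blast
    moreover have "u \<in> verts G" using u cycle_hedge endp_in_verts by blast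
    ultimately show "u \<in> cl v" unfolding vclass_def by blast
  qed
qed

lemma vclass_off_cycle: "v \<in> verts G \<Longrightarrow> v \<notin> C \<Longrightarrow> cl v = {v}"
  using rtrancl_sadj_cycle unfolding vclass_def by blast

lemma vclass_eq_iff:
  "u \<in> verts G \<Longrightarrow> v \<in> verts G \<Longrightarrow> cl u = cl v \<longleftrightarrow> u = v \<or> (u \<in> C \<and> v \<in> C)"
  using vclass_cycle vclass_off_cycle by (metis insert_iff singleton_iff)

lemma vclass_eq_cycle_iff: "v \<in> verts G \<Longrightarrow> cl v = C \<longleftrightarrow> v \<in> C"
  using vclass_cycle vclass_off_cycle by blast

lemma edges_contract: "edges Gc = edges G - S"
  unfolding edges_def using Union_cycle_edges_iff by fastforce

lemma walk_contract: "walk G a p b \<Longrightarrow> walk Gc (cl a) p (cl b)"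
  by (induction p arbitrary: a) auto

lemma walk_contract_lift:
  "walk Gc (cl a) d V \<Longrightarrow> a \<in> verts G \<Longrightarrow> \<forall>h\<in>set d. h \<in> hedges G \<and> endp G h \<notin> C \<Longrightarrow>
    \<exists>b. walk G a d b \<and> b \<in> verts G \<and> cl b = V"
proof (induction d arbitrary: a)
  case (Cons h d)
  then have "endp G h = a" using vclass_eq_iff endp_in_verts by auto
  moreover have "\<exists>b. walk G (endp G (invol G h)) d b \<and> b \<in> verts G \<and> cl b = V"
    using Cons endp_in_verts invol_in_hedges by simp
  ultimately show ?case by simp
qed auto

lemma is_cycle_contractD:
  assumes "is_cycle Gc d"
  shows "\<forall>h\<in>set d. h \<in> hedges G \<and> h \<notin> \<Union>S \<and> invol G h \<noteq> h"
    and "distinct (map (\<lambda>h. cl (endp G h)) d)"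
    and "distinct (map (\<lambda>h. {h, invol G h}) d)"
  using assms unfolding is_cycle_iff by (auto simp: comp_def)

lemma is_cycle_of_contract_off_cycle:
  assumes d: "is_cycle Gc d" and off: "\<forall>h\<in>set d. endp G h \<notin> C"
  shows "is_cycle G d"
proof -
  note facts = is_cycle_contractD[OF d]
  obtain h r where hr: "d = h # r" using d unfolding is_cycle_def by (cases d) auto
  have a: "endp G h \<in> verts G" "endp G h \<notin> C" using facts(1) off endp_in_verts hr by auto
  have "walk Gc (cl (endp G h)) d (cl (endp G h))" using d hr unfolding is_cycle_iff by simp
  then obtain b where "walk G (endp G h) d b" "b \<in> verts G" "cl b = cl (endp G h)"
    using walk_contract_lift a(1) facts(1) off by blast
  then have "closed_walk G d" using a vclass_eq_iff hr by auto
  moreover have "distinct (map (endp G) d)"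
    using facts(2) distinct_map[of cl "map (endp G) d"] by (simp add: comp_def)
  ultimately show ?thesis using facts unfolding is_cycle_iff by blast
qed

lemma contract_cycle_close:
  assumes d: "is_cycle Gc (h # r)" and h: "endp G h \<in> C"
  obtains p where "set p \<subseteq> set c" "is_cycle G (h # r @ p)"
proof -
  note facts = is_cycle_contractD[OF d]
  have r_off: "\<forall>g\<in>set r. endp G g \<notin> C"
  proof
    fix g assume "g \<in> set r"
    then have "cl (endp G g) \<noteq> cl (endp G h)" using facts(2) by auto
    then show "endp G g \<notin> C" using vclass_cycle h by auto
  qed
  have "walk Gc (cl (endp G h)) (h # r) C" using d h vclass_cycle unfolding is_cycle_iff by simp
  then have "walk Gc (cl (endp G (invol G h))) r C" by simp
  moreover have "endp G (invol G h) \<in> verts G"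
    using facts(1) endp_in_verts invol_in_hedges by simp
  moreover have "\<forall>g\<in>set r. g \<in> hedges G \<and> endp G g \<notin> C" using facts(1) r_off by simp
  ultimately obtain a where a: "walk G (endp G (invol G h)) r a" "a \<in> verts G" "cl a = C"
    using walk_contract_lift by blast
  then have "a \<in> C" using vclass_eq_cycle_iff by blast
  then obtain p where p: "set p \<subseteq> set c" "walk G a p (endp G h)" "endp G h \<notin> endp G ` set p"
      "distinct (map (endp G) p)" "distinct (map (\<lambda>h. {h, invol G h}) p)"
    using cycle_arc[OF cycle _ h] by metis
  have "closed_walk G (h # r @ p)" using a(1) p(2) by (auto simp: walk_append)
  moreover have "distinct (map (endp G) (h # r @ p))"
  proof -
    have "distinct (map (endp G) r)"
      using facts(2) distinct_map[of cl "map (endp G) r"] by (simp add: comp_def)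
    moreover have "endp G ` set p \<subseteq> C" using p(1) by blast
    ultimately show ?thesis using r_off h p(3,4) by auto
  qed
  moreover have "distinct (map (\<lambda>h. {h, invol G h}) (h # r @ p))"
  proof -
    have "{g, invol G g} \<notin> S" if "g \<in> set (h # r)" for g
      using that facts(1) Union_cycle_edges_iff by blast
    moreover have "{g, invol G g} \<in> S" if "g \<in> set p" for g
      using that p(1) unfolding cycle_edges_def by blast
    ultimately show ?thesis using facts(3) p(5) by fastforce
  qed
  moreover have "\<forall>g\<in>set (h # r @ p). g \<in> hedges G \<and> invol G g \<noteq> g"
    using facts(1) p(1) cycle_hedge by auto
  ultimately show ?thesis using that p(1) unfolding is_cycle_iff by blast
qed

lemma cycle_balanced_contract:
  assumes t_S: "\<forall>e\<in>S. t e = 0" and bal: "cycle_balanced G w t"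
  shows "cycle_balanced Gc w t"
  unfolding cycle_balanced_def walk_sum_contract
proof (intro allI impI)
  fix d assume d: "is_cycle Gc d"
  show "walk_sum G w t d = 0"
  proof (cases "\<exists>h\<in>set d. endp G h \<in> C")
    case True
    then obtain u h r where d_eq: "d = u @ h # r" and h: "endp G h \<in> C"
      by (metis split_list)
    have "is_cycle Gc (h # r @ u)" using d d_eq is_cycle_rotate by fastforce
    then obtain p where p: "set p \<subseteq> set c" "is_cycle G (h # r @ u @ p)"
      using contract_cycle_close h by (metis append.assoc)
    have "walk_sum G w t p = 0"
      using p(1) t_S by (intro walk_sum_eq_0) (auto simp: cycle_edges_def)
    moreover have "walk_sum G w t (h # r @ u @ p) = 0"
      using bal p(2) unfolding cycle_balanced_def by blast
    ultimately show ?thesis using d_eq by (simp add: add_ac)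
  next
    case False
    then show ?thesis using d bal is_cycle_of_contract_off_cycle unfolding cycle_balanced_def by blast
  qed
qed

(* Images in Gc of cycles of G: closed walks that may pass several times through the contracted
   vertex C but through no other vertex twice. *)
definition circuit :: "'h list \<Rightarrow> bool" where
  "circuit q \<longleftrightarrow> closed_walk Gc q \<and> (\<forall>h\<in>set q. h \<in> hedges G \<and> invol G h \<noteq> h) \<and>
     distinct (map (\<lambda>h. {h, invol G h}) q) \<and>
     distinct (map (endp G) (filter (\<lambda>h. endp G h \<notin> C) q))"

lemma circuit_of_cycle: "is_cycle G d \<Longrightarrow> circuit d"
  unfolding is_cycle_iff circuit_def closed_walk_def
  using walk_contract distinct_map_filter by blast

lemma circuit_rotate: "circuit (u @ v) \<Longrightarrow> circuit (v @ u)"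
  unfolding circuit_def
  using closed_walk_rotate distinct_append_swap[of "map (\<lambda>h. {h, invol G h}) u"]
    distinct_append_swap[of "map (endp G) (filter (\<lambda>h. endp G h \<notin> C) u)"]
  by (auto simp del: distinct_append)

lemma circuit_prefix: "circuit (u @ v) \<Longrightarrow> closed_walk Gc u \<Longrightarrow> circuit u"
  unfolding circuit_def by auto

lemma circuit_drop_cycle_edge:
  assumes q: "circuit (h # r)" and h: "h \<in> \<Union>S" and r: "r \<noteq> []"
  shows "circuit r"
proof -
  have "walk Gc (cl (endp G h)) (h # r) (cl (endp G h))" using q unfolding circuit_def by simp
  then have "walk Gc C r C" using Union_cycle_edges_endp[OF h] vclass_cycle by simp
  then have "closed_walk Gc r" using r unfolding closed_walk_def by blast
  moreover have "circuit (r @ [h])" using circuit_rotate[of "[h]" r] q by simp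
  ultimately show ?thesis using circuit_prefix by blast
qed

lemma circuit_is_contract_cycle:
  assumes q: "circuit q" and off_S: "\<forall>h\<in>set q. h \<notin> \<Union>S"
    and once: "length (filter (\<lambda>h. endp G h \<in> C) q) \<le> 1"
  shows "is_cycle Gc q"
proof -
  have verts: "\<forall>h\<in>set q. endp G h \<in> verts G"
    using q endp_in_verts unfolding circuit_def by blast
  have "distinct (map (\<lambda>h. cl (endp G h)) q)"
  proof (rule distinct_map_by_filter)
    let ?F = "filter (\<lambda>h. endp G h \<notin> C) q"
    have "inj_on cl (endp G ` set ?F)"
      using verts vclass_eq_iff by (auto simp: inj_on_def)
    moreover have "distinct (map (endp G) ?F)" using q unfolding circuit_def by blast
    ultimately show "distinct (map (\<lambda>h. cl (endp G h)) ?F)"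
      using distinct_map[of cl "map (endp G) ?F"] by (simp add: comp_def)
    show "distinct (map (\<lambda>h. cl (endp G h)) (filter (\<lambda>h. \<not> endp G h \<notin> C) q))"
      using once by (intro distinct_length_le_1) simp
    show "\<forall>x\<in>set q. \<forall>y\<in>set q. endp G x \<notin> C \<longrightarrow> \<not> endp G y \<notin> C \<longrightarrow>
        cl (endp G x) \<noteq> cl (endp G y)"
      using verts vclass_eq_iff by auto
  qed
  then show ?thesis using q off_S unfolding circuit_def is_cycle_iff by simp
qed

lemma circuit_split:
  assumes q: "circuit q" and twice: "2 \<le> length (filter (\<lambda>h. endp G h \<in> C) q)"
  obtains u v A B where "q = u @ v" "v @ u = A @ B" "A \<noteq> []" "B \<noteq> []" "circuit A" "circuit B"
proof -
  have "\<exists>x y zs. filter (\<lambda>h. endp G h \<in> C) q = x # y # zs"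
    using twice by (simp add: numeral_2_eq_2 Suc_le_length_iff) blast
  then obtain x y zs where "filter (\<lambda>h. endp G h \<in> C) q = x # y # zs" by blast
  then obtain u vs where q_eq1: "q = u @ x # vs" and x: "endp G x \<in> C"
      and "filter (\<lambda>h. endp G h \<in> C) vs = y # zs"
    using filter_eq_ConsD by (metis (no_types, lifting))
  then obtain v' ws where "vs = v' @ y # ws" and y: "endp G y \<in> C"
    using filter_eq_ConsD by (metis (no_types, lifting))
  then have q_eq: "q = u @ x # v' @ y # ws" using q_eq1 by simp
  define A where "A = x # v'"
  define B where "B = y # ws @ u"
  have AB: "(x # v' @ y # ws) @ u = A @ B" unfolding A_def B_def by simp
  have AB_circuit: "circuit (A @ B)" using circuit_rotate q q_eq AB by metis
  then have "walk Gc C (A @ B) C"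
    using x vclass_cycle unfolding circuit_def A_def by simp
  then have "walk Gc C A C" "walk Gc C B C"
    using y vclass_cycle unfolding walk_append B_def by auto
  then have "closed_walk Gc A" "closed_walk Gc B"
    unfolding closed_walk_def A_def B_def by blast+
  then have "circuit A" "circuit B"
    using circuit_prefix[OF AB_circuit] circuit_prefix[OF circuit_rotate[OF AB_circuit]] by auto
  then show ?thesis using that q_eq AB unfolding A_def B_def by blast
qed

lemma walk_sum_circuit:
  assumes t_S: "\<forall>e\<in>S. t e = 0" and bal: "cycle_balanced Gc w t"
  shows "circuit q \<Longrightarrow> walk_sum G w t q = 0"
proof (induction "length q" arbitrary: q rule: less_induct)
  case less
  consider (twice) "2 \<le> length (filter (\<lambda>h. endp G h \<in> C) q)"
    | (cycle_edge) "\<exists>h\<in>set q. h \<in> \<Union>S"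
    | (once) "length (filter (\<lambda>h. endp G h \<in> C) q) \<le> 1" "\<forall>h\<in>set q. h \<notin> \<Union>S"
    by (cases "2 \<le> length (filter (\<lambda>h. endp G h \<in> C) q)") auto
  then show ?case
  proof cases
    case twice
    then obtain u v A B where q: "q = u @ v" and AB: "v @ u = A @ B" "A \<noteq> []" "B \<noteq> []"
        and "circuit A" "circuit B"
      using circuit_split less.prems by blast
    moreover have "length q = length A + length B"
      using q AB(1) by (metis length_append add.commute)
    ultimately have "walk_sum G w t A = 0" "walk_sum G w t B = 0"
      using less.hyps AB(2,3) by simp_all
    moreover have "walk_sum G w t q = walk_sum G w t A + walk_sum G w t B"
      using q AB(1) walk_sum_rotate[of G w t u v] by simp
    ultimately show ?thesis by simp
  next
    case cycle_edge
    then obtain h where "h \<in> set q" and h: "h \<in> \<Union>S" by blast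
    then obtain u r where q: "q = u @ h # r" using split_list by metis
    have "circuit (h # r @ u)" using circuit_rotate[of u "h # r"] less.prems q by simp
    then have "h \<in> hedges G" unfolding circuit_def by simp
    then have "t {h, invol G h} = 0" using t_S h Union_cycle_edges_iff by blast
    then have "walk_sum G w t q = walk_sum G w t (r @ u)"
      using q by (simp add: add_ac)
    also have "\<dots> = 0"
    proof (cases "r @ u = []")
      case False
      then have "circuit (r @ u)" using circuit_drop_cycle_edge \<open>circuit (h # r @ u)\<close> h by blast
      moreover have "length (r @ u) < length q" using q by simp
      ultimately show ?thesis using less.hyps by blast
    qed simp
    finally show ?thesis .
  next
    case once
    then have "is_cycle Gc q" using circuit_is_contract_cycle less.prems by blast
    then show ?thesis using bal unfolding cycle_balanced_def by simp
  qed
qed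

lemma cycle_balanced_of_contract:
  assumes "\<forall>e\<in>S. t e = 0" "cycle_balanced Gc w t"
  shows "cycle_balanced G w t"
  using assms walk_sum_circuit circuit_of_cycle unfolding cycle_balanced_def by blast

lemma cone_contract:
  assumes "positive_cycle G w c"
  shows "cone Gc w = cone G w"
proof
  show "cone G w \<subseteq> cone Gc w"
  proof
    fix t assume t: "t \<in> cone G w"
    then have t_S: "\<forall>e\<in>S. t e = 0" using positive_cycle_cone_vanishes assms by blast
    then have "cycle_balanced Gc w t" using t cycle_balanced_contract by (simp add: cone_iff)
    then show "t \<in> cone Gc w" using t t_S by (auto simp: cone_iff edges_contract)
  qed
  show "cone Gc w \<subseteq> cone G w"
  proof
    fix t assume t: "t \<in> cone Gc w"
    then have t_S: "\<forall>e\<in>S. t e = 0" by (simp add: cone_iff edges_contract)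
    then have "cycle_balanced G w t" using t cycle_balanced_of_contract by (simp add: cone_iff)
    then show "t \<in> cone G w" using t t_S by (auto simp: cone_iff edges_contract)
  qed
qed

lemma cone_contract_zero_extension:
  "(\<lambda>(s, z) e. if e \<in> S then z e else s e) ` (cone Gc w \<times> {\<lambda>_. 0}) = cone Gc w"
proof -
  have extend: "(\<lambda>e. if e \<in> S then 0 else s e) = s" if "s \<in> cone Gc w" for s
    using that by (auto simp: cone_iff edges_contract fun_eq_iff)
  show ?thesis
  proof (intro equalityI subsetI)
    fix x assume "x \<in> (\<lambda>(s, z) e. if e \<in> S then z e else s e) ` (cone Gc w \<times> {\<lambda>_. 0})"
    then obtain s where "s \<in> cone Gc w" "x = (\<lambda>e. if e \<in> S then 0 else s e)" by auto
    then show "x \<in> cone Gc w" using extend by simp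
  next
    fix s assume s: "s \<in> cone Gc w"
    then have "s = (\<lambda>(s, z) e. if e \<in> S then z e else s e) (s, \<lambda>_. 0)" using extend by simp
    then show "s \<in> (\<lambda>(s, z) e. if e \<in> S then z e else s e) ` (cone Gc w \<times> {\<lambda>_. 0})"
      using s by blast
  qed
qed

end

theorem lemma3p10:
  fixes G :: "('v, 'h) lgraph" and w :: "'h \<Rightarrow> int" and c :: "'h list"
  assumes "wf_graph G" and "connected_graph G"
    and "is_weighting G w"
    and "positive_cycle G w c"
  shows "cone G w =
    (\<lambda>(s, z) e. if e \<in> cycle_edges G c then z e else s e) `
      (cone (contract G (cycle_edges G c)) w \<times> {\<lambda>_. 0})"
proof -
  interpret cycle_contraction G c
    using assms(1,4) unfolding positive_cycle_def by unfold_locales auto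
  show ?thesis using cone_contract[OF assms(4)] cone_contract_zero_extension[of w] by simp
qed

end
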